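(* Consider a finite-horizon tabular MDP with stationary transition kernel $P$, $S$ states, $A$ actions, horizon $H$. Fix $t\in[H]$ and $u>0$. Let $\mathcal D_2$ consist of $l$ i.i.d. episodes from behavior policy $\mu$, and let $V_{t+1},V^{\rm in}_{t+1}:\mathcal S\to\mathbb R$ be fixed (not depending on $\mathcal D_2$) with $\|V_{t+1}-V^{\rm in}_{t+1}\|_\infty\le2u$. Let $n'_{s,a}=\sum_{j=1}^l\sum_{v=1}^H\mathbf 1[s'^{(j)}_v=s,a'^{(j)}_v=a]$, $f(s,a)=4u\sqrt{\log(2HSA/\delta)/(l\sum_{t=1}^Hd^\mu_t(s,a))}$, and define $g_t(s,a)=P(\cdot|s,a)^\top[V_{t+1}-V^{\rm in}_{t+1}]-f(s,a)$ if $n'_{s,a}\le\frac12l\sum_{t=1}^Hd^\mu_t(s,a)$, and otherwise \[ g_t(s,a)=\frac1{n'_{s,a}}\sum_{j=1}^l\sum_{v=1}^H[V_{t+1}(s'^{(j)}_{v+1})-V^{\rm in}_{t+1}(s'^{(j)}_{v+1})]\mathbf 1[s'^{(j)}_v=s,a'^{(j)}_v=a]-f(s,a). \] Then with probability at least $1-\delta/H$, for all $(s,a)$ with $\sum_td^\mu_t(s,a)>0$, \[ 0\le P(\cdot|s,a)^\top[V_{t+1}-V^{\rm in}_{t+1}]-g_t(s,a)\le8u\sqrt{\frac{\log(2HSA/\delta)}{l\sum_{t=1}^Hd^\mu_t(s,a)}}. \]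
   Context: Episodes: $s_1\sim d_1$, $a_v\sim\mu_v(\cdot|s_v)$, $s_{v+1}\sim P(\cdot|s_v,a_v)$; $(s'^{(j)}_v,a'^{(j)}_v)$ denote the $j$-th episode of $\mathcal D_2$. $d^\mu_t(s,a)=\mathbb P^\mu(s_t=s,a_t=a)$. $\delta\in(0,1)$. *)

theory Defs
  imports "HOL-Probability.Probability"
begin

text \<open>An episode of horizon H is represented as a pair (tr, sf) where tr is the list
  [(s_1,a_1),...,(s_H,a_H)] and sf = s_{H+1} is the final state.\<close>

fun gen_traj :: "(nat \<Rightarrow> 's \<Rightarrow> 'a pmf) \<Rightarrow> ('s \<Rightarrow> 'a \<Rightarrow> 's pmf) \<Rightarrow> nat \<Rightarrow> nat \<Rightarrow> 's
                  \<Rightarrow> (('s \<times> 'a) list \<times> 's) pmf" where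
  "gen_traj \<mu> P v 0 s = return_pmf ([], s)"
| "gen_traj \<mu> P v (Suc k) s =
     bind_pmf (\<mu> v s) (\<lambda>a. bind_pmf (P s a) (\<lambda>s'.
       map_pmf (\<lambda>(tr, sf). ((s, a) # tr, sf)) (gen_traj \<mu> P (Suc v) k s')))"

definition episode_pmf :: "'s pmf \<Rightarrow> (nat \<Rightarrow> 's \<Rightarrow> 'a pmf) \<Rightarrow> ('s \<Rightarrow> 'a \<Rightarrow> 's pmf) \<Rightarrow> nat
                           \<Rightarrow> (('s \<times> 'a) list \<times> 's) pmf" where
  "episode_pmf d1 \<mu> P H = bind_pmf d1 (\<lambda>s. gen_traj \<mu> P 1 H s)"

text \<open>State s_v (1 \<le> v \<le> H+1) and action a_v (1 \<le> v \<le> H) of an episode.\<close>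
definition ep_s :: "(('s \<times> 'a) list \<times> 's) \<Rightarrow> nat \<Rightarrow> 's" where
  "ep_s e v = (if v \<le> length (fst e) then fst (fst e ! (v - 1)) else snd e)"

definition ep_a :: "(('s \<times> 'a) list \<times> 's) \<Rightarrow> nat \<Rightarrow> 'a" where
  "ep_a e v = snd (fst e ! (v - 1))"

definition occ :: "'s pmf \<Rightarrow> (nat \<Rightarrow> 's \<Rightarrow> 'a pmf) \<Rightarrow> ('s \<Rightarrow> 'a \<Rightarrow> 's pmf) \<Rightarrow> nat
                   \<Rightarrow> nat \<Rightarrow> 's \<Rightarrow> 'a \<Rightarrow> real" where
  "occ d1 \<mu> P H t s a =
     measure_pmf.prob (episode_pmf d1 \<mu> P H) {e. ep_s e t = s \<and> ep_a e t = a}"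

definition dataset_pmf :: "nat \<Rightarrow> 's pmf \<Rightarrow> (nat \<Rightarrow> 's \<Rightarrow> 'a pmf) \<Rightarrow> ('s \<Rightarrow> 'a \<Rightarrow> 's pmf) \<Rightarrow> nat
                           \<Rightarrow> (nat \<Rightarrow> (('s \<times> 'a) list \<times> 's)) pmf" where
  "dataset_pmf l d1 \<mu> P H = Pi_pmf {1..l} undefined (\<lambda>_. episode_pmf d1 \<mu> P H)"

definition visit_count :: "nat \<Rightarrow> nat \<Rightarrow> (nat \<Rightarrow> (('s \<times> 'a) list \<times> 's)) \<Rightarrow> 's \<Rightarrow> 'a \<Rightarrow> real" where
  "visit_count l H D s a =
     (\<Sum>j\<in>{1..l}. \<Sum>v\<in>{1..H}. if ep_s (D j) v = s \<and> ep_a (D j) v = a then 1 else 0)"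

definition occ_total :: "'s pmf \<Rightarrow> (nat \<Rightarrow> 's \<Rightarrow> 'a pmf) \<Rightarrow> ('s \<Rightarrow> 'a \<Rightarrow> 's pmf) \<Rightarrow> nat
                         \<Rightarrow> 's \<Rightarrow> 'a \<Rightarrow> real" where
  "occ_total d1 \<mu> P H s a = (\<Sum>t'\<in>{1..H}. occ d1 \<mu> P H t' s a)"

definition PV_diff :: "('s \<Rightarrow> 'a \<Rightarrow> 's pmf) \<Rightarrow> ('s \<Rightarrow> real) \<Rightarrow> ('s \<Rightarrow> real) \<Rightarrow> 's \<Rightarrow> 'a \<Rightarrow> real" where
  "PV_diff P V Vin s a = measure_pmf.expectation (P s a) (\<lambda>s'. V s' - Vin s')"

end

theory Submission
  imports Defs
begin

text \<open>Fix a pair \<open>(s, a)\<close> and a sign \<open>\<sigma> = \<plusminus>1\<close>, and put \<open>Y = V - Vin\<close>. At each visit of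
  \<open>(s, a)\<close> the increment \<open>Y(s_{v+1}) - P(.|s,a)\<^sup>T Y\<close> is conditionally centred and lies in
  \<open>[-2u, 2u]\<close>. Hoeffding's lemma, applied transition by transition along an episode and multiplied
  over the independent episodes, shows that \<open>exp(\<lambda> \<cdot> (sum of increments) - 2 \<lambda>\<^sup>2 u\<^sup>2 n'_{s,a})\<close>
  has expectation at most 1 for every \<open>\<lambda>\<close>, although the number of visits is random. With the
  optimal \<open>\<lambda>\<close>, Markov's inequality bounds the probability of the event
  \<open>n'_{s,a} > l d(s,a) / 2 \<and> \<sigma> \<cdot> (sum of increments) > f(s,a) n'_{s,a}\<close>, where
  \<open>d = occ_total d1 \<mu> P H\<close>, by \<open>\<delta> / (2HSA)\<close>. Outside the union of these \<open>2SA\<close> events the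
  empirical mean is within \<open>f(s,a)\<close> of \<open>P(.|s,a)\<^sup>T Y\<close> whenever the visit count is large, and
  in both branches of the definition of \<open>g\<close> this gives \<open>0 \<le> P(.|s,a)\<^sup>T Y - g \<le> 2 f(s,a)\<close>.\<close>

lemma nn_integral_exp_centered_le_1:
  fixes p :: "'s pmf" and Y :: "'s \<Rightarrow> real"
  assumes bounded: "\<And>x. \<bar>Y x\<bar> \<le> c"
  shows "(\<integral>\<^sup>+x. ennreal (exp (lam * (Y x - measure_pmf.expectation p Y) - lam\<^sup>2 * c\<^sup>2 / 2)) \<partial>p) \<le> 1"
proof (cases "lam = 0")
  case True
  then show ?thesis by simp
next
  case False
  define Z where "Z = (\<lambda>x. sgn lam * Y x)"
  interpret Z: interval_bounded_random_variable "measure_pmf p" Z "-c" c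
  proof
    have "Z x \<in> {-c..c}" for x
      using bounded[of x] by (auto simp: Z_def sgn_if)
    then show "AE x in measure_pmf p. Z x \<in> {-c..c}"
      by simp
  qed simp
  have tilt: "lam * (Y x - measure_pmf.expectation p Y) = \<bar>lam\<bar> * (Z x - measure_pmf.expectation p Z)" for x
  proof -
    have "\<bar>lam\<bar> * (Z x - measure_pmf.expectation p Z)
        = (\<bar>lam\<bar> * sgn lam) * (Y x - measure_pmf.expectation p Y)"
      unfolding Z_def by (simp only: integral_mult_right_zero right_diff_distrib[symmetric] mult.assoc)
    then show ?thesis by (simp only: abs_mult_sgn)
  qed
  have "(\<integral>\<^sup>+x. ennreal (exp (lam * (Y x - measure_pmf.expectation p Y) - lam\<^sup>2 * c\<^sup>2 / 2)) \<partial>p)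
      = (\<integral>\<^sup>+x. ennreal (exp (- (lam\<^sup>2 * c\<^sup>2 / 2)))
              * ennreal (exp (\<bar>lam\<bar> * (Z x - measure_pmf.expectation p Z))) \<partial>p)"
    by (intro nn_integral_cong) (simp add: tilt ennreal_mult[symmetric] flip: exp_add)
  also have "\<dots> = ennreal (exp (- (lam\<^sup>2 * c\<^sup>2 / 2)))
      * (\<integral>\<^sup>+x. ennreal (exp (\<bar>lam\<bar> * (Z x - measure_pmf.expectation p Z))) \<partial>p)"
    by (rule nn_integral_cmult) simp
  also have "\<dots> \<le> ennreal (exp (- (lam\<^sup>2 * c\<^sup>2 / 2))) * ennreal (exp (\<bar>lam\<bar>\<^sup>2 * (c - - c)\<^sup>2 / 8))"
    using False by (intro mult_left_mono Z.Hoeffdings_lemma_nn_integral) auto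
  also have "\<dots> = 1"
    by (simp add: power2_eq_square flip: ennreal_mult exp_add)
  finally show ?thesis .
qed

definition transition_sum :: "('s \<Rightarrow> 'a \<Rightarrow> 's \<Rightarrow> real) \<Rightarrow> nat \<Rightarrow> ('s \<times> 'a) list \<times> 's \<Rightarrow> real" where
  "transition_sum G k e = (\<Sum>v\<in>{1..k}. G (ep_s e v) (ep_a e v) (ep_s e (v + 1)))"

lemma transition_sum_Cons:
  "transition_sum G (Suc k) ((s, a) # tr, sf) = G s a (ep_s (tr, sf) 1) + transition_sum G k (tr, sf)"
proof -
  have "transition_sum G (Suc k) ((s, a) # tr, sf)
      = G s a (ep_s (tr, sf) 1) + (\<Sum>v\<in>{1..k}. G (ep_s ((s, a) # tr, sf) (Suc v))
          (ep_a ((s, a) # tr, sf) (Suc v)) (ep_s ((s, a) # tr, sf) (Suc v + 1)))"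
    unfolding transition_sum_def
    by (subst sum.atLeast_Suc_atMost)
      (simp_all add: sum.atLeast_Suc_atMost_Suc_shift ep_s_def ep_a_def del: sum.cl_ivl_Suc)
  also have "(\<Sum>v\<in>{1..k}. G (ep_s ((s, a) # tr, sf) (Suc v))
          (ep_a ((s, a) # tr, sf) (Suc v)) (ep_s ((s, a) # tr, sf) (Suc v + 1)))
      = transition_sum G k (tr, sf)"
    unfolding transition_sum_def by (intro sum.cong) (auto simp: ep_s_def ep_a_def)
  finally show ?thesis .
qed

lemma ep_s_1_gen_traj: "e \<in> set_pmf (gen_traj \<mu> P v k s) \<Longrightarrow> ep_s e 1 = s"
  by (cases k) (auto simp: ep_s_def)

lemma nn_integral_gen_traj_exp_le_1:
  fixes P :: "'s \<Rightarrow> 'a \<Rightarrow> 's pmf"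
  assumes step: "\<And>s a. (\<integral>\<^sup>+s'. ennreal (exp (G s a s')) \<partial>P s a) \<le> 1"
  shows "(\<integral>\<^sup>+e. ennreal (exp (transition_sum G k e)) \<partial>gen_traj \<mu> P v k s) \<le> 1"
proof (induction k arbitrary: v s)
  case 0
  then show ?case by (simp add: transition_sum_def)
next
  case (Suc k)
  have continuation: "(\<integral>\<^sup>+e. ennreal (exp (transition_sum G (Suc k) ((s, a) # fst e, snd e)))
        \<partial>gen_traj \<mu> P (Suc v) k s') \<le> ennreal (exp (G s a s'))" for a s'
  proof -
    have "(\<integral>\<^sup>+e. ennreal (exp (transition_sum G (Suc k) ((s, a) # fst e, snd e))) \<partial>gen_traj \<mu> P (Suc v) k s')
        = (\<integral>\<^sup>+e. ennreal (exp (G s a s')) * ennreal (exp (transition_sum G k e)) \<partial>gen_traj \<mu> P (Suc v) k s')"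
      by (intro nn_integral_cong_AE AE_pmfI)
        (auto simp: transition_sum_Cons exp_add ennreal_mult dest: ep_s_1_gen_traj)
    also have "\<dots> = ennreal (exp (G s a s'))
        * (\<integral>\<^sup>+e. ennreal (exp (transition_sum G k e)) \<partial>gen_traj \<mu> P (Suc v) k s')"
      by (rule nn_integral_cmult) simp
    also have "\<dots> \<le> ennreal (exp (G s a s'))"
      using mult_left_mono[OF Suc.IH, of "ennreal (exp (G s a s'))"] by simp
    finally show ?thesis .
  qed
  have "(\<integral>\<^sup>+e. ennreal (exp (transition_sum G (Suc k) e)) \<partial>gen_traj \<mu> P v (Suc k) s)
      = (\<integral>\<^sup>+a. \<integral>\<^sup>+s'. \<integral>\<^sup>+e. ennreal (exp (transition_sum G (Suc k) ((s, a) # fst e, snd e)))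
          \<partial>gen_traj \<mu> P (Suc v) k s' \<partial>P s a \<partial>\<mu> v s)"
    by (simp add: case_prod_unfold)
  also have "\<dots> \<le> (\<integral>\<^sup>+a. \<integral>\<^sup>+s'. ennreal (exp (G s a s')) \<partial>P s a \<partial>\<mu> v s)"
    by (intro nn_integral_mono continuation)
  also have "\<dots> \<le> (\<integral>\<^sup>+a. 1 \<partial>\<mu> v s)"
    by (intro nn_integral_mono step)
  finally show ?case by simp
qed

lemma nn_integral_episode_exp_le_1:
  fixes P :: "'s \<Rightarrow> 'a \<Rightarrow> 's pmf"
  assumes "\<And>s a. (\<integral>\<^sup>+s'. ennreal (exp (G s a s')) \<partial>P s a) \<le> 1"
  shows "(\<integral>\<^sup>+e. ennreal (exp (transition_sum G H e)) \<partial>episode_pmf d1 \<mu> P H) \<le> 1"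
proof -
  have "(\<integral>\<^sup>+e. ennreal (exp (transition_sum G H e)) \<partial>episode_pmf d1 \<mu> P H)
      = (\<integral>\<^sup>+s. \<integral>\<^sup>+e. ennreal (exp (transition_sum G H e)) \<partial>gen_traj \<mu> P 1 H s \<partial>d1)"
    by (simp add: episode_pmf_def)
  also have "\<dots> \<le> (\<integral>\<^sup>+s. 1 \<partial>d1)"
    by (intro nn_integral_mono nn_integral_gen_traj_exp_le_1 assms)
  finally show ?thesis by simp
qed

lemma nn_integral_dataset_exp_le_1:
  fixes P :: "'s \<Rightarrow> 'a \<Rightarrow> 's pmf"
  assumes "\<And>s a. (\<integral>\<^sup>+s'. ennreal (exp (G s a s')) \<partial>P s a) \<le> 1"
  shows "(\<integral>\<^sup>+D. ennreal (exp (\<Sum>j\<in>{1..l}. transition_sum G H (D j))) \<partial>dataset_pmf l d1 \<mu> P H) \<le> 1"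
proof -
  have "(\<integral>\<^sup>+D. ennreal (exp (\<Sum>j\<in>{1..l}. transition_sum G H (D j))) \<partial>dataset_pmf l d1 \<mu> P H)
      = (\<integral>\<^sup>+D. (\<Prod>j\<in>{1..l}. ennreal (exp (transition_sum G H (D j)))) \<partial>dataset_pmf l d1 \<mu> P H)"
    by (simp add: exp_sum prod_ennreal)
  also have "\<dots> = (\<Prod>j\<in>{1..l}. \<integral>\<^sup>+e. ennreal (exp (transition_sum G H e)) \<partial>episode_pmf d1 \<mu> P H)"
    unfolding dataset_pmf_def by (rule nn_integral_prod_Pi_pmf) simp
  also have "\<dots> \<le> 1"
    by (intro prod_le_1) (simp add: nn_integral_episode_exp_le_1 assms)
  finally show ?thesis .
qed

definition visit_sum ::
    "nat \<Rightarrow> nat \<Rightarrow> (nat \<Rightarrow> ('s \<times> 'a) list \<times> 's) \<Rightarrow> 's \<Rightarrow> 'a \<Rightarrow> ('s \<Rightarrow> real) \<Rightarrow> real" where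
  "visit_sum l H D s a Y =
     (\<Sum>j\<in>{1..l}. \<Sum>v\<in>{1..H}. if ep_s (D j) v = s \<and> ep_a (D j) v = a then Y (ep_s (D j) (v + 1)) else 0)"

lemma prob_visit_sum_exp_tail:
  fixes P :: "'s \<Rightarrow> 'a \<Rightarrow> 's pmf" and Y :: "'s \<Rightarrow> real" and s :: 's and a :: 'a
  assumes "\<And>x. \<bar>Y x\<bar> \<le> c"
  defines "m \<equiv> measure_pmf.expectation (P s a) Y"
  shows "measure_pmf.prob (dataset_pmf l d1 \<mu> P H)
           {D. L \<le> lam * (visit_sum l H D s a Y - m * visit_count l H D s a)
                    - lam\<^sup>2 * c\<^sup>2 / 2 * visit_count l H D s a}
         \<le> exp (- L)"
proof -
  define G where "G x y z = (if x = s \<and> y = a then lam * (Y z - m) - lam\<^sup>2 * c\<^sup>2 / 2 else 0)" for x y z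
  have step: "(\<integral>\<^sup>+z. ennreal (exp (G x y z)) \<partial>P x y) \<le> 1" for x y
    using nn_integral_exp_centered_le_1[where Y = Y and p = "P s a", OF assms(1)]
    by (cases "x = s \<and> y = a") (auto simp: G_def m_def)
  have exponent: "(\<Sum>j\<in>{1..l}. transition_sum G H (D j))
      = lam * (visit_sum l H D s a Y - m * visit_count l H D s a) - lam\<^sup>2 * c\<^sup>2 / 2 * visit_count l H D s a" for D
  proof -
    have G_split: "G = (\<lambda>x y z. lam * (if x = s \<and> y = a then Y z else 0)
                    - (lam * m + lam\<^sup>2 * c\<^sup>2 / 2) * (if x = s \<and> y = a then 1 else 0))"
      by (auto simp: G_def fun_eq_iff right_diff_distrib)
    show ?thesis
      unfolding transition_sum_def visit_sum_def visit_count_def G_split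
      by (simp add: sum_subtractf sum_distrib_left sum.distrib algebra_simps)
  qed
  let ?p = "dataset_pmf l d1 \<mu> P H"
  have "emeasure ?p {D \<in> space ?p. L \<le> (\<Sum>j\<in>{1..l}. transition_sum G H (D j))}
      \<le> ennreal (exp (- 1 * L))
          * (\<integral>\<^sup>+D\<in>space ?p. ennreal (exp (1 * (\<Sum>j\<in>{1..l}. transition_sum G H (D j)))) \<partial>?p)"
    by (rule Chernoff_ineq_nn_integral_ge) simp_all
  also have "\<dots> \<le> ennreal (exp (- L))"
    using mult_left_mono[OF nn_integral_dataset_exp_le_1[OF step], of "ennreal (exp (- L))"] by simp
  finally show ?thesis
    unfolding exponent by (simp add: measure_pmf.emeasure_eq_measure)
qed

text \<open>The tilt \<open>\<lambda> = 2 \<sigma> sqrt q / c\<close> is the optimal one: it maximises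
  \<open>\<lambda> \<sigma> (2 c sqrt q n) - \<lambda>\<^sup>2 c\<^sup>2 n / 2\<close>.\<close>

lemma subgaussian_exponent_ge:
  fixes c q N n Z \<sigma> :: real
  assumes "0 < c" "0 \<le> q" "\<sigma>\<^sup>2 = 1" "N / 2 < n" "2 * c * sqrt q * n < \<sigma> * Z"
  shows "q * N \<le> (2 * \<sigma> * sqrt q / c) * Z - (2 * \<sigma> * sqrt q / c)\<^sup>2 * c\<^sup>2 / 2 * n"
proof -
  have "4 * q * n = (2 * sqrt q / c) * (2 * c * sqrt q * n)"
    using assms(1,2) by (simp add: field_simps power2_eq_square[symmetric])
  also have "\<dots> \<le> (2 * sqrt q / c) * (\<sigma> * Z)"
    using assms(1,2,5) by (intro mult_left_mono) auto
  finally have "4 * q * n \<le> (2 * \<sigma> * sqrt q / c) * Z"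
    by (simp add: field_simps)
  moreover have "(2 * \<sigma> * sqrt q / c)\<^sup>2 * c\<^sup>2 / 2 * n = 2 * q * n"
    using assms(1-3) by (simp add: power_mult_distrib power_divide)
  moreover have "q * N \<le> 2 * q * n"
    using assms(2,4) mult_left_mono[of N "2 * n" q] by simp
  ultimately show ?thesis by linarith
qed

lemma prob_visit_sum_deviation_le:
  fixes P :: "'s \<Rightarrow> 'a \<Rightarrow> 's pmf" and Y :: "'s \<Rightarrow> real" and s :: 's and a :: 'a
  assumes "\<And>x. \<bar>Y x\<bar> \<le> c" "0 < c" "0 \<le> q" "\<sigma>\<^sup>2 = 1"
  defines "m \<equiv> measure_pmf.expectation (P s a) Y"
  shows "measure_pmf.prob (dataset_pmf l d1 \<mu> P H)
           {D. N / 2 < visit_count l H D s a \<and>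
               2 * c * sqrt q * visit_count l H D s a
                 < \<sigma> * (visit_sum l H D s a Y - m * visit_count l H D s a)}
         \<le> exp (- (q * N))" (is "measure_pmf.prob ?p ?E \<le> _")
proof -
  let ?lam = "2 * \<sigma> * sqrt q / c"
  have "measure_pmf.prob ?p ?E
      \<le> measure_pmf.prob ?p
           {D. q * N \<le> ?lam * (visit_sum l H D s a Y - m * visit_count l H D s a)
                         - ?lam\<^sup>2 * c\<^sup>2 / 2 * visit_count l H D s a}"
    by (intro measure_pmf.finite_measure_mono subsetI CollectI)
      (use subgaussian_exponent_ge[OF assms(2-4)] in blast, simp)
  also have "\<dots> \<le> exp (- (q * N))"
    unfolding m_def by (rule prob_visit_sum_exp_tail[OF assms(1)])
  finally show ?thesis .
qed

lemma prob_visit_sum_deviation_le_inverse: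
  fixes P :: "'s \<Rightarrow> 'a \<Rightarrow> 's pmf" and Y :: "'s \<Rightarrow> real" and s :: 's and a :: 'a and d :: real
  assumes "\<And>x. \<bar>Y x\<bar> \<le> c" "0 < c" "1 < K" "\<sigma>\<^sup>2 = 1"
  defines "m \<equiv> measure_pmf.expectation (P s a) Y"
  shows "measure_pmf.prob (dataset_pmf l d1 \<mu> P H)
           {D. 0 < d \<and> 1/2 * real l * d < visit_count l H D s a \<and>
               2 * c * sqrt (ln K / (real l * d)) * visit_count l H D s a
                 < \<sigma> * (visit_sum l H D s a Y - m * visit_count l H D s a)}
         \<le> 1 / K" (is "measure_pmf.prob ?p ?E \<le> _")
proof (cases "0 < d \<and> 0 < l")
  case True
  define q where "q = ln K / (real l * d)"
  have "measure_pmf.prob ?p ?E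
      \<le> measure_pmf.prob ?p {D. real l * d / 2 < visit_count l H D s a \<and>
            2 * c * sqrt q * visit_count l H D s a
              < \<sigma> * (visit_sum l H D s a Y - m * visit_count l H D s a)}"
    by (intro measure_pmf.finite_measure_mono subsetI) (auto simp: q_def)
  also have "\<dots> \<le> exp (- (q * (real l * d)))"
    unfolding m_def using True assms(1-4) by (intro prob_visit_sum_deviation_le) (auto simp: q_def)
  also have "\<dots> = 1 / K"
    using True assms(3) by (simp add: q_def exp_minus inverse_eq_divide)
  finally show ?thesis .
next
  case False
  \<comment> \<open>Then \<open>ln K / (real l * d)\<close> is meaningless, but the event is empty:
    for \<open>l = 0\<close> there are no visits at all.\<close>
  then have "?E = {}"
    by (auto simp: visit_count_def)
  then have "measure_pmf.prob ?p ?E = 0"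
    by (simp only: measure_empty)
  with assms(3) show ?thesis
    by simp
qed

lemma prob_compl_UNION_ge:
  fixes p :: "'b pmf"
  assumes "finite I" "\<And>i. i \<in> I \<Longrightarrow> measure_pmf.prob p (B i) \<le> \<epsilon>"
  shows "1 - real (card I) * \<epsilon> \<le> measure_pmf.prob p (UNIV - (\<Union>i\<in>I. B i))"
proof -
  have "measure_pmf.prob p (\<Union>i\<in>I. B i) \<le> (\<Sum>i\<in>I. measure_pmf.prob p (B i))"
    using assms(1) by (rule measure_pmf.finite_measure_subadditive_finite) simp
  also have "\<dots> \<le> real (card I) * \<epsilon>"
    using sum_mono[of I _ "\<lambda>_. \<epsilon>", OF assms(2)] by simp
  finally show ?thesis
    using measure_pmf.prob_compl[of "\<Union>i\<in>I. B i" p] by simp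
qed

lemma estimate_gap_bounds:
  fixes m f n T E :: real
  assumes "0 \<le> f" "0 \<le> T" and close: "T < n \<Longrightarrow> \<bar>E - m * n\<bar> \<le> f * n"
  defines "g \<equiv> if n \<le> T then m - f else 1 / n * E - f"
  shows "0 \<le> m - g \<and> m - g \<le> 2 * f"
proof (cases "n \<le> T")
  case True
  then show ?thesis using assms(1) by (simp add: g_def)
next
  case False
  then have "0 < n" using assms(2) by linarith
  moreover have "\<bar>E - m * n\<bar> \<le> f * n" using False close by simp
  ultimately have "\<bar>E / n - m\<bar> \<le> f"
    by (simp add: field_simps abs_div_pos[symmetric])
  then show ?thesis using False by (simp add: g_def abs_le_iff)
qed

theorem lemmaC3:
  fixes d1 :: "'s::finite pmf"
    and \<mu> :: "nat \<Rightarrow> 's \<Rightarrow> 'a::finite pmf"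
    and P :: "'s \<Rightarrow> 'a \<Rightarrow> 's pmf"
    and H t l :: nat
    and u \<delta> :: real
    and V Vin :: "'s \<Rightarrow> real"
  assumes "1 \<le> t" "t \<le> H"
    and "u > 0"
    and "0 < \<delta>" "\<delta> < 1"
    and "\<And>s. \<bar>V s - Vin s\<bar> \<le> 2 * u"
  defines "f \<equiv> \<lambda>s a. 4 * u * sqrt (ln (2 * real H * real CARD('s) * real CARD('a) / \<delta>)
                                   / (real l * occ_total d1 \<mu> P H s a))"
  shows "measure_pmf.prob (dataset_pmf l d1 \<mu> P H)
           {D. \<forall>s a. occ_total d1 \<mu> P H s a > 0 \<longrightarrow>
                 (let g = (if visit_count l H D s a \<le> 1/2 * real l * occ_total d1 \<mu> P H s a
                           then PV_diff P V Vin s a - f s a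
                           else (1 / visit_count l H D s a) *
                                  (\<Sum>j\<in>{1..l}. \<Sum>v\<in>{1..H}.
                                     (if ep_s (D j) v = s \<and> ep_a (D j) v = a
                                      then V (ep_s (D j) (v + 1)) - Vin (ep_s (D j) (v + 1)) else 0))
                                - f s a)
                  in 0 \<le> PV_diff P V Vin s a - g \<and>
                     PV_diff P V Vin s a - g
                       \<le> 8 * u * sqrt (ln (2 * real H * real CARD('s) * real CARD('a) / \<delta>)
                                       / (real l * occ_total d1 \<mu> P H s a)))}
         \<ge> 1 - \<delta> / real H"
proof -
  let "measure_pmf.prob ?p ?good \<ge> _" = ?thesis
  define K where "K = 2 * real H * real CARD('s) * real CARD('a) / \<delta>"
  define Y where "Y = (\<lambda>s'. V s' - Vin s')"
  define bad where "bad = (\<lambda>(s, a, \<sigma>::real). {D. 0 < occ_total d1 \<mu> P H s a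
      \<and> 1/2 * real l * occ_total d1 \<mu> P H s a < visit_count l H D s a
      \<and> 2 * (2 * u) * sqrt (ln K / (real l * occ_total d1 \<mu> P H s a)) * visit_count l H D s a
          < \<sigma> * (visit_sum l H D s a Y - measure_pmf.expectation (P s a) Y * visit_count l H D s a)})"
  let ?I = "(UNIV :: 's set) \<times> (UNIV :: 'a set) \<times> {1, -1::real}"
  \<comment> \<open>The index \<open>t\<close> plays no role beyond forcing \<open>0 < H\<close>:
    \<open>V\<close> and \<open>Vin\<close> are arbitrary fixed functions.\<close>
  have "0 < H"
    using assms(1,2) by simp
  then have "1 \<le> real H * real CARD('s) * real CARD('a)"
    by (simp add: Suc_le_eq flip: of_nat_mult)
  then have "1 < K"
    using assms(4,5) by (simp add: K_def field_simps)
  have f_K: "f s a = 2 * (2 * u) * sqrt (ln K / (real l * occ_total d1 \<mu> P H s a))" for s a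
    by (simp add: f_def K_def)
  have bad_le: "measure_pmf.prob ?p (bad (s, a, \<sigma>)) \<le> 1 / K" if "\<sigma>\<^sup>2 = 1" for s a \<sigma>
    unfolding bad_def prod.case
    by (rule prob_visit_sum_deviation_le_inverse) (use assms(3,6) \<open>1 < K\<close> that in \<open>auto simp: Y_def\<close>)
  have good: "UNIV - (\<Union>i\<in>?I. bad i) \<subseteq> ?good"
  proof
    fix D assume D: "D \<in> UNIV - (\<Union>i\<in>?I. bad i)"
    have "0 \<le> PV_diff P V Vin s a - g \<and> PV_diff P V Vin s a - g \<le> 2 * f s a"
      if "0 < occ_total d1 \<mu> P H s a"
        and "g = (if visit_count l H D s a \<le> 1/2 * real l * occ_total d1 \<mu> P H s a
                  then PV_diff P V Vin s a - f s a
                  else 1 / visit_count l H D s a * visit_sum l H D s a Y - f s a)" for s a g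
      unfolding that(2) using D that(1) \<open>1 < K\<close> assms(3)
      by (intro estimate_gap_bounds) (force simp: bad_def abs_le_iff f_K PV_diff_def Y_def)+
    from this[OF _ refl] show "D \<in> ?good"
      unfolding Let_def visit_sum_def Y_def f_def by (simp add: mult.assoc)
  qed
  have "1 - \<delta> / real H \<le> measure_pmf.prob ?p (UNIV - (\<Union>i\<in>?I. bad i))"
    using prob_compl_UNION_ge[of ?I ?p bad "1 / K"] bad_le \<open>0 < H\<close> assms(4)
    by (force simp: K_def card_cartesian_product)
  also have "\<dots> \<le> measure_pmf.prob ?p ?good"
    using good by (rule measure_pmf.finite_measure_mono) simp
  finally show ?thesis .
qed

end
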